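(* Let $p>2$ be a prime and let $a,b\in\mathbb{C}_p$ with $a\neq0$, $b\neq0$, $a\neq b$, $|2a|_p=|b|_p$ and $|2a-b|_p=|a|_p$. Let $P=-\frac1b$, $D=\mathbb{C}_p\setminus\{P\}$, $f(x)=\frac{ax^2}{bx+1}$ on $D$, $x_1=0$, $x_2=\frac1{a-b}$. Then $x_1$ is an attracting fixed point and $x_2$ is an indifferent fixed point of $f$, and $$A(x_1)=B_{\frac{1}{|a|_p}}(x_1),\qquad SI(x_2)=B_{\frac1{|a-b|_p}}(x_2).$$
   Context: $\mathbb{C}_p$ is the field of complex $p$-adic numbers with $p$-adic norm $|\cdot|_p$. For $c\in\mathbb{C}_p$, $r>0$: $B_r(c)=\{x:|x-c|_p<r\}$, $S_r(c)=\{x:|x-c|_p=r\}$. For $y\in D$, $y^{(n)}=f^n(y)$ is the $n$-th iterate (defined as long as no earlier iterate equals $P$). A fixed point $x^{(0)}$ of $f$ is attracting if $|f'(x^{(0)})|_p<1$ and indifferent if $|f'(x^{(0)})|_p=1$. Its basin of attraction is $A(x^{(0)})=\{y: y^{(n)}\text{ defined for all }n,\ y^{(n)}\to x^{(0)}\}$. A ball $B_r(x^{(0)})$ contained in $D$ is a Siegel disk of $x^{(0)}$ if every sphere $S_\rho(x^{(0)})$ with $\rho<r$ is invariant, i.e. $x\in S_\rho(x^{(0)})$ implies $x^{(n)}\in S_\rho(x^{(0)})$ for all $n\ge1$; the maximal Siegel disk $SI(x^{(0)})$ is the union of all Siegel disks centered at $x^{(0)}$. *)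

theory Defs
  imports Complex_Main "HOL-Computational_Algebra.Polynomial"
begin

text \<open>Abstract model of the complex p-adic numbers: a field carrying an absolute value
  N (playing the role of the p-adic norm) which is non-archimedean, normalised by
  N p = 1/p, complete, and whose field is algebraically closed.\<close>

definition Cp_like :: "nat \<Rightarrow> ('a::field \<Rightarrow> real) \<Rightarrow> bool" where
  "Cp_like p N \<longleftrightarrow>
     (\<forall>x. N x \<ge> 0) \<and> (\<forall>x. N x = 0 \<longleftrightarrow> x = 0) \<and>
     (\<forall>x y. N (x * y) = N x * N y) \<and>
     (\<forall>x y. N (x + y) \<le> max (N x) (N y)) \<and>
     N (of_nat p) = 1 / real p \<and>
     (\<forall>X::nat \<Rightarrow> 'a. (\<forall>e>0. \<exists>M. \<forall>m\<ge>M. \<forall>n\<ge>M. N (X m - X n) < e)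
          \<longrightarrow> (\<exists>l. (\<lambda>n. N (X n - l)) \<longlonglongrightarrow> 0)) \<and>
     (\<forall>q::'a poly. degree q \<ge> 1 \<longrightarrow> (\<exists>x. poly q x = 0))"

definition nball :: "('a::field \<Rightarrow> real) \<Rightarrow> 'a \<Rightarrow> real \<Rightarrow> 'a set" where
  "nball N c r = {x. N (x - c) < r}"

definition nsphere :: "('a::field \<Rightarrow> real) \<Rightarrow> 'a \<Rightarrow> real \<Rightarrow> 'a set" where
  "nsphere N c r = {x. N (x - c) = r}"

definition nderiv :: "('a::field \<Rightarrow> real) \<Rightarrow> 'a set \<Rightarrow> ('a \<Rightarrow> 'a) \<Rightarrow> 'a \<Rightarrow> 'a \<Rightarrow> bool" where
  "nderiv N D f x0 L \<longleftrightarrow>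
     (\<forall>e>0. \<exists>d>0. \<forall>x\<in>D. 0 < N (x - x0) \<and> N (x - x0) < d \<longrightarrow>
        N ((f x - f x0) / (x - x0) - L) < e)"

definition attracting_fp :: "('a::field \<Rightarrow> real) \<Rightarrow> 'a set \<Rightarrow> ('a \<Rightarrow> 'a) \<Rightarrow> 'a \<Rightarrow> bool" where
  "attracting_fp N D f x0 \<longleftrightarrow> x0 \<in> D \<and> f x0 = x0 \<and> (\<exists>L. nderiv N D f x0 L \<and> N L < 1)"

definition indifferent_fp :: "('a::field \<Rightarrow> real) \<Rightarrow> 'a set \<Rightarrow> ('a \<Rightarrow> 'a) \<Rightarrow> 'a \<Rightarrow> bool" where
  "indifferent_fp N D f x0 \<longleftrightarrow> x0 \<in> D \<and> f x0 = x0 \<and> (\<exists>L. nderiv N D f x0 L \<and> N L = 1)"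

text \<open>Orbit defined for all n: no iterate leaves D (i.e. hits the pole).\<close>
definition basin :: "('a::field \<Rightarrow> real) \<Rightarrow> 'a set \<Rightarrow> ('a \<Rightarrow> 'a) \<Rightarrow> 'a \<Rightarrow> 'a set" where
  "basin N D f x0 = {y. (\<forall>n. (f ^^ n) y \<in> D) \<and> (\<lambda>n. N ((f ^^ n) y - x0)) \<longlonglongrightarrow> 0}"

definition siegel_disk :: "('a::field \<Rightarrow> real) \<Rightarrow> 'a set \<Rightarrow> ('a \<Rightarrow> 'a) \<Rightarrow> 'a \<Rightarrow> real \<Rightarrow> bool" where
  "siegel_disk N D f x0 r \<longleftrightarrow> r > 0 \<and> nball N x0 r \<subseteq> D \<and>
     (\<forall>\<rho>. \<rho> < r \<longrightarrow> (\<forall>x \<in> nsphere N x0 \<rho>. \<forall>n\<ge>1. (f ^^ n) x \<in> nsphere N x0 \<rho>))"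

definition max_siegel :: "('a::field \<Rightarrow> real) \<Rightarrow> 'a set \<Rightarrow> ('a \<Rightarrow> 'a) \<Rightarrow> 'a \<Rightarrow> 'a set" where
  "max_siegel N D f x0 = \<Union>{nball N x0 r | r. siegel_disk N D f x0 r}"

end

theory Submission
  imports Defs
begin

(* Since p is odd, |2| = 1, so the hypotheses say |b| = |a| and |2a - b| = |a|.
   On the ball |x| < 1/|a| the denominator has |bx + 1| = 1, hence |f x| = |a| |x|^2 and
   orbits converge to 0; outside it |bx + 1| <= |a| |x|, hence |f x| >= |x| and orbits stay away.
   Near x2 = 1/(a - b) one has f x - x2 = (x - x2) (f'(x2) + E) with |f'(x2)| = |2a - b|/|a| = 1
   and |E| < 1 as long as |x - x2| < 1/|a - b|, so by the strict triangle inequality f preserves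
   every sphere about x2 in that ball; the pole -1/b lies on its boundary sphere, so no larger
   ball about x2 is a Siegel disk. *)

locale nonarch_absval =
  fixes N :: "'a::field \<Rightarrow> real"
  assumes N_nonneg: "N x \<ge> 0"
    and N_eq_0_iff: "N x = 0 \<longleftrightarrow> x = 0"
    and N_mult: "N (x * y) = N x * N y"
    and N_add_le_max: "N (x + y) \<le> max (N x) (N y)"

lemma Cp_like_nonarch_absval: "Cp_like p N \<Longrightarrow> nonarch_absval N"
  unfolding Cp_like_def nonarch_absval_def by blast

context nonarch_absval
begin

lemma N_0 [simp]: "N 0 = 0"
  by (simp add: N_eq_0_iff)

lemma N_pos: "x \<noteq> 0 \<Longrightarrow> N x > 0"
  using N_nonneg[of x] N_eq_0_iff[of x] by linarith

lemma N_one: "N 1 = 1"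
  using N_mult[of 1 1] N_pos[of 1] by simp

lemma N_minus: "N (- x) = N x"
proof -
  have "N (- 1) * N (- 1) = 1"
    using N_mult[of "- 1" "- 1"] N_one by simp
  then have "N (- 1) = 1"
    using N_nonneg[of "- 1"] square_eq_1_iff[of "N (- 1)"] by linarith
  then show ?thesis
    using N_mult[of "- 1" x] by simp
qed

lemma N_divide: "N (x / y) = N x / N y"
proof (cases "y = 0")
  case False
  then have "N (x / y) * N y = N x"
    using N_mult[of "x / y" y] by simp
  then show ?thesis
    using N_pos[OF False] by (simp add: field_simps)
qed simp

lemma N_power: "N (x ^ n) = N x ^ n"
  by (induction n) (simp_all add: N_one N_mult)

lemma N_diff_le_max: "N (x - y) \<le> max (N x) (N y)"
  using N_add_le_max[of x "- y"] by (simp add: N_minus)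

lemma N_add_eq_left:
  assumes "N y < N x"
  shows "N (x + y) = N x"
proof -
  have "N x \<le> max (N (x + y)) (N y)"
    using N_diff_le_max[of "x + y" y] by simp
  then show ?thesis
    using N_add_le_max[of x y] assms by linarith
qed

lemma N_of_nat_le_one: "N (of_nat n) \<le> 1"
proof (induction n)
  case (Suc n)
  then show ?case
    using N_add_le_max[of 1 "of_nat n"] by (simp add: N_one)
qed simp

lemma N_two:
  assumes "odd p" and "N (of_nat p) < 1"
  shows "N 2 = 1"
proof -
  obtain k where p: "p = 2 * k + 1"
    using assms(1) oddE by blast
  have "N (2 * of_nat k) \<le> N 2"
    using N_mult[of 2 "of_nat k"] N_of_nat_le_one[of k] N_nonneg[of 2]
    by (simp add: mult_left_le)
  moreover have "1 \<le> max (N (of_nat p)) (N (2 * of_nat k))"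
    using N_diff_le_max[of "of_nat p" "2 * of_nat k"] by (simp add: p N_one)
  ultimately have "1 \<le> N 2"
    using assms(2) by linarith
  then show ?thesis
    using N_of_nat_le_one[of 2] by simp
qed

lemma ball_subset_basin:
  assumes "r > 0"
    and contract: "\<And>z. N (z - x0) < r \<Longrightarrow> z \<in> D \<and> N (f z - x0) \<le> N (z - x0) ^ 2 / r"
  shows "nball N x0 r \<subseteq> basin N D f x0"
proof
  fix y
  assume "y \<in> nball N x0 r"
  then have y: "N (y - x0) < r"
    by (simp add: nball_def)
  define t where "t = N (y - x0) / r"
  have t: "0 \<le> t" "t < 1"
    using y \<open>r > 0\<close> N_nonneg[of "y - x0"] by (simp_all add: t_def)
  have shrink: "N (y - x0) * t ^ n \<le> N (y - x0)" for n
    using t N_nonneg[of "y - x0"] by (simp add: mult_left_le power_le_one)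
  have bound: "N ((f ^^ n) y - x0) \<le> N (y - x0) * t ^ n" for n
  proof (induction n)
    case (Suc n)
    define z where "z = (f ^^ n) y"
    have "N (z - x0) \<le> N (y - x0)"
      using Suc shrink[of n] by (simp add: z_def)
    then have "N (z - x0) / r \<le> t"
      using \<open>r > 0\<close> by (simp add: t_def divide_right_mono)
    have "N (f z - x0) \<le> N (z - x0) * (N (z - x0) / r)"
      using contract[of z] \<open>N (z - x0) \<le> N (y - x0)\<close> y by (simp add: power2_eq_square)
    also have "\<dots> \<le> N (z - x0) * t"
      using \<open>N (z - x0) / r \<le> t\<close> N_nonneg by (rule mult_left_mono)
    also have "\<dots> \<le> N (y - x0) * t ^ n * t"
      using Suc t by (simp add: z_def mult_right_mono)
    finally show ?case
      by (simp add: z_def ac_simps)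
  qed simp
  have "N ((f ^^ n) y - x0) < r" for n
    using bound[of n] shrink[of n] y by linarith
  then have "(f ^^ n) y \<in> D" for n
    using contract by blast
  moreover have "(\<lambda>n. N ((f ^^ n) y - x0)) \<longlonglongrightarrow> 0"
  proof (rule tendsto_sandwich[OF _ _ tendsto_const])
    show "(\<lambda>n. N (y - x0) * t ^ n) \<longlonglongrightarrow> 0"
      using t by (intro tendsto_mult_right_zero LIMSEQ_power_zero) auto
  qed (use bound N_nonneg in auto)
  ultimately show "y \<in> basin N D f x0"
    by (simp add: basin_def)
qed

end

lemma basin_subset_ball:
  assumes "r > 0"
    and expand: "\<And>z. z \<in> D \<Longrightarrow> r \<le> N (z - x0) \<Longrightarrow> N (z - x0) \<le> N (f z - x0)"
  shows "basin N D f x0 \<subseteq> nball N x0 r"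
proof
  fix y
  assume y: "y \<in> basin N D f x0"
  then have orbit: "(f ^^ n) y \<in> D" for n
    by (simp add: basin_def)
  show "y \<in> nball N x0 r"
  proof (rule ccontr)
    assume "y \<notin> nball N x0 r"
    then have far: "r \<le> N ((f ^^ n) y - x0)" for n
    proof (induction n)
      case (Suc n)
      then show ?case
        using expand[OF orbit[of n]] by simp
    qed (simp add: nball_def)
    have "(\<lambda>n. N ((f ^^ n) y - x0)) \<longlonglongrightarrow> 0"
      using y by (simp add: basin_def)
    then have "r \<le> 0"
      using far by (intro LIMSEQ_le_const) auto
    then show False
      using \<open>r > 0\<close> by simp
  qed
qed

lemma siegel_disk_if_isometric:
  assumes "r > 0"
    and isometric: "\<And>z. N (z - x0) < r \<Longrightarrow> z \<in> D \<and> N (f z - x0) = N (z - x0)"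
  shows "siegel_disk N D f x0 r"
proof -
  have "N ((f ^^ n) x - x0) = N (x - x0)" if "N (x - x0) < r" for x n
    using that by (induction n) (simp_all add: isometric)
  then show ?thesis
    using assms unfolding siegel_disk_def nball_def nsphere_def by auto
qed

lemma max_siegel_eq_ball:
  assumes "r > 0"
    and isometric: "\<And>z. N (z - x0) < r \<Longrightarrow> z \<in> D \<and> N (f z - x0) = N (z - x0)"
    and "P \<notin> D" and "N (P - x0) = r"
  shows "max_siegel N D f x0 = nball N x0 r"
proof
  show "nball N x0 r \<subseteq> max_siegel N D f x0"
    using siegel_disk_if_isometric[OF assms(1,2)] unfolding max_siegel_def by blast
  have "s \<le> r" if "siegel_disk N D f x0 s" for s
    using that assms(3,4) unfolding siegel_disk_def nball_def
    by (metis mem_Collect_eq not_le subsetD)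
  then show "max_siegel N D f x0 \<subseteq> nball N x0 r"
    unfolding max_siegel_def nball_def by fastforce
qed

definition qmap :: "'a::field \<Rightarrow> 'a \<Rightarrow> 'a \<Rightarrow> 'a" where
  "qmap a b x = a * x\<^sup>2 / (b * x + 1)"

definition qmap_deriv :: "'a::field \<Rightarrow> 'a \<Rightarrow> 'a \<Rightarrow> 'a" where
  "qmap_deriv a b y = a * y * (b * y + 2) / (b * y + 1)\<^sup>2"

lemma qmap_diff:
  fixes a b x y :: "'a::field"
  assumes "b * x + 1 \<noteq> 0" and "b * y + 1 \<noteq> 0"
  shows "qmap a b x - qmap a b y =
    (x - y) * (qmap_deriv a b y + a * (x - y) / ((b * x + 1) * (b * y + 1)\<^sup>2))"
  using assms unfolding qmap_def qmap_deriv_def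
  by (simp add: divide_simps) algebra

lemma mem_qmap_domain_iff:
  fixes b z :: "'a::field"
  assumes "b \<noteq> 0"
  shows "z \<in> UNIV - {- 1 / b} \<longleftrightarrow> b * z + 1 \<noteq> 0"
  using assms by (auto simp: field_simps add_eq_0_iff)

lemma qmap_denominator_fixed_point:
  fixes a b :: "'a::field"
  assumes "a \<noteq> b"
  shows "b * (1 / (a - b)) + 1 = a / (a - b)"
  using assms by (simp add: field_simps)

lemma qmap_fixed_point:
  fixes a b :: "'a::field"
  assumes "a \<noteq> 0" and "a \<noteq> b"
  shows "qmap a b (1 / (a - b)) = 1 / (a - b)"
proof -
  have "a - b \<noteq> 0" using assms(2) by simp
  then show ?thesis
    using assms(1) unfolding qmap_def qmap_denominator_fixed_point[OF assms(2)]
    by (simp add: power2_eq_square)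
qed

lemma qmap_deriv_fixed_point:
  fixes a b :: "'a::field"
  assumes "a \<noteq> 0" and "a \<noteq> b"
  shows "qmap_deriv a b (1 / (a - b)) = (2 * a - b) / a"
proof -
  have "b * (1 / (a - b)) + 2 = (2 * a - b) / (a - b)"
    using assms by (simp add: field_simps)
  then show ?thesis
    using assms unfolding qmap_deriv_def qmap_denominator_fixed_point[OF assms(2)]
    by (simp add: power2_eq_square)
qed

context nonarch_absval
begin

lemma N_qmap: "N (qmap a b z) = N a * N z ^ 2 / N (b * z + 1)"
  by (simp add: qmap_def N_divide N_mult N_power)

lemma N_denominator_eq:
  assumes "N (b * (x - y)) < N (b * y + 1)"
  shows "N (b * x + 1) = N (b * y + 1)"
  using N_add_eq_left[OF assms] by (simp add: algebra_simps)

lemma N_qmap_quotient_minus_deriv: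
  assumes "b * y + 1 \<noteq> 0" and "x \<noteq> y" and "N (b * (x - y)) < N (b * y + 1)"
  shows "N ((qmap a b x - qmap a b y) / (x - y) - qmap_deriv a b y)
           = N a * N (x - y) / N (b * y + 1) ^ 3"
proof -
  have bx: "N (b * x + 1) = N (b * y + 1)"
    using N_denominator_eq[OF assms(3)] .
  then have "b * x + 1 \<noteq> 0"
    using N_pos[OF assms(1)] by auto
  then have "(qmap a b x - qmap a b y) / (x - y) - qmap_deriv a b y
               = a * (x - y) / ((b * x + 1) * (b * y + 1)\<^sup>2)"
    using qmap_diff[OF _ assms(1), of x a] assms(2) by simp
  then show ?thesis
    by (simp add: N_divide N_mult N_power bx power3_eq_cube power2_eq_square)
qed

lemma nderiv_qmap:
  assumes "b * y + 1 \<noteq> 0"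
  shows "nderiv N D (qmap a b) y (qmap_deriv a b y)"
  unfolding nderiv_def
proof (intro allI impI)
  fix e :: real
  assume "e > 0"
  define c where "c = N (b * y + 1)"
  have "c > 0"
    using N_pos[OF assms] by (simp add: c_def)
  \<comment> \<open>dividing by N b + 1 rather than N b avoids the junk value c / 0 = 0 when b = 0\<close>
  define d where "d = min (c / (N b + 1)) (e * c ^ 3 / (N a + 1))"
  have "d > 0"
    using \<open>c > 0\<close> \<open>e > 0\<close> N_nonneg[of a] N_nonneg[of b] by (simp add: d_def)
  moreover have "N ((qmap a b x - qmap a b y) / (x - y) - qmap_deriv a b y) < e"
    if "0 < N (x - y)" and "N (x - y) < d" for x
  proof -
    have less: "u * N (x - y) < (u + 1) * d" if "u \<ge> 0" for u
      using mult_left_mono[of "N (x - y)" d u] that \<open>0 < N (x - y)\<close> \<open>N (x - y) < d\<close>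
      by (simp add: distrib_right)
    have "d \<le> c / (N b + 1)" and "d \<le> e * c ^ 3 / (N a + 1)"
      by (simp_all add: d_def)
    then have "(N b + 1) * d \<le> c" and "(N a + 1) * d \<le> e * c ^ 3"
      using N_nonneg[of a] N_nonneg[of b] by (simp_all add: pos_le_divide_eq mult.commute)
    then have "N (b * (x - y)) < N (b * y + 1)" and "N a * N (x - y) < e * c ^ 3"
      using less[OF N_nonneg[of b]] less[OF N_nonneg[of a]]
      by (auto simp: N_mult c_def intro: less_le_trans)
    moreover have "x \<noteq> y"
      using that(1) by auto
    ultimately show ?thesis
      using N_qmap_quotient_minus_deriv[OF assms, of x a] \<open>c > 0\<close>
      by (simp add: c_def pos_divide_less_eq)
  qed
  ultimately show "\<exists>d>0. \<forall>x\<in>D. 0 < N (x - y) \<and> N (x - y) < d \<longrightarrow>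
      N ((qmap a b x - qmap a b y) / (x - y) - qmap_deriv a b y) < e"
    by blast
qed

lemma attracting_fp_qmap_zero:
  assumes "b \<noteq> 0"
  shows "attracting_fp N (UNIV - {- 1 / b}) (qmap a b) 0"
proof -
  have "nderiv N (UNIV - {- 1 / b}) (qmap a b) 0 0"
    using nderiv_qmap[of b 0 _ a] by (simp add: qmap_deriv_def)
  then show ?thesis
    using assms by (auto simp: attracting_fp_def qmap_def)
qed

lemma indifferent_fp_qmap_fixed_point:
  assumes "a \<noteq> 0" and "b \<noteq> 0" and "a \<noteq> b" and "N (2 * a - b) = N a"
  shows "indifferent_fp N (UNIV - {- 1 / b}) (qmap a b) (1 / (a - b))"
proof -
  have "b * (1 / (a - b)) + 1 \<noteq> 0"
    using assms(1,3) unfolding qmap_denominator_fixed_point[OF assms(3)] by simp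
  then have "nderiv N (UNIV - {- 1 / b}) (qmap a b) (1 / (a - b)) ((2 * a - b) / a)"
    using nderiv_qmap qmap_deriv_fixed_point[OF assms(1,3)] by metis
  moreover have "N ((2 * a - b) / a) = 1"
    using assms(1,4) by (simp add: N_divide N_eq_0_iff)
  ultimately show ?thesis
    using \<open>b * (1 / (a - b)) + 1 \<noteq> 0\<close> mem_qmap_domain_iff[OF assms(2)] qmap_fixed_point[OF assms(1,3)]
    unfolding indifferent_fp_def by blast
qed

lemma basin_qmap_zero:
  assumes "a \<noteq> 0" and "b \<noteq> 0" and "N b = N a"
  shows "basin N (UNIV - {- 1 / b}) (qmap a b) 0 = nball N 0 (1 / N a)"
proof (rule antisym)
  have "N a > 0"
    using N_pos[OF assms(1)] .
  show "basin N (UNIV - {- 1 / b}) (qmap a b) 0 \<subseteq> nball N 0 (1 / N a)"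
  proof (rule basin_subset_ball)
    fix z
    assume "z \<in> UNIV - {- 1 / b}" and "1 / N a \<le> N (z - 0)"
    then have "b * z + 1 \<noteq> 0" and far: "1 \<le> N a * N z"
      using mem_qmap_domain_iff[OF assms(2)] \<open>N a > 0\<close> by (simp_all add: field_simps)
    have "N (b * z + 1) \<le> N a * N z"
      using N_add_le_max[of "b * z" 1] far by (simp add: N_mult N_one assms(3))
    have "N z = N a * N z ^ 2 / (N a * N z)"
      using far \<open>N a > 0\<close> by (simp add: power2_eq_square)
    also have "\<dots> \<le> N a * N z ^ 2 / N (b * z + 1)"
      using \<open>N (b * z + 1) \<le> N a * N z\<close> N_pos[OF \<open>b * z + 1 \<noteq> 0\<close>] far N_nonneg[of a]
      by (intro divide_left_mono) auto
    finally show "N (z - 0) \<le> N (qmap a b z - 0)"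
      by (simp add: N_qmap)
  qed (use \<open>N a > 0\<close> in simp)
  show "nball N 0 (1 / N a) \<subseteq> basin N (UNIV - {- 1 / b}) (qmap a b) 0"
  proof (rule ball_subset_basin)
    fix z
    assume "N (z - 0) < 1 / N a"
    then have "N (b * (z - 0)) < N (b * 0 + 1)"
      using \<open>N a > 0\<close> by (simp add: N_mult N_one assms(3) field_simps)
    then have "N (b * z + 1) = 1"
      using N_denominator_eq[of b z 0] by (simp add: N_one)
    then show "z \<in> UNIV - {- 1 / b} \<and> N (qmap a b z - 0) \<le> N (z - 0) ^ 2 / (1 / N a)"
      using assms(2) by (auto simp: mem_qmap_domain_iff N_qmap)
  qed (use \<open>N a > 0\<close> in simp)
qed

lemma qmap_isometric_near_fixed_point:
  assumes "a \<noteq> 0" and "a \<noteq> b" and "N b = N a" and "N (2 * a - b) = N a"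
    and close: "N (z - 1 / (a - b)) < 1 / N (a - b)"
  shows "b * z + 1 \<noteq> 0" and "N (qmap a b z - 1 / (a - b)) = N (z - 1 / (a - b))"
proof -
  define x2 where "x2 = 1 / (a - b)"
  define \<kappa> where "\<kappa> = N a / N (a - b)"
  have "N (a - b) > 0" and "N a > 0"
    using assms(1,2) by (simp_all add: N_pos)
  moreover have "N (a - b) \<le> N a"
    using N_diff_le_max[of a b] assms(3) by simp
  ultimately have "1 \<le> \<kappa>"
    by (simp add: \<kappa>_def)
  have den: "N (b * x2 + 1) = \<kappa>"
    unfolding x2_def qmap_denominator_fixed_point[OF assms(2)] by (simp add: N_divide \<kappa>_def)
  then have "b * x2 + 1 \<noteq> 0"
    using \<open>1 \<le> \<kappa>\<close> by auto
  have "N a * N (z - x2) < \<kappa>"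
    using mult_strict_left_mono[OF close \<open>N a > 0\<close>] by (simp add: x2_def \<kappa>_def)
  then have near: "N (b * (z - x2)) < N (b * x2 + 1)"
    by (simp add: N_mult assms(3) den)
  then have "N (b * z + 1) = \<kappa>"
    using N_denominator_eq[OF near] den by simp
  then show "b * z + 1 \<noteq> 0"
    using \<open>1 \<le> \<kappa>\<close> by auto
  show "N (qmap a b z - 1 / (a - b)) = N (z - 1 / (a - b))"
  proof (cases "z = x2")
    case False
    define q where "q = (qmap a b z - qmap a b x2) / (z - x2)"
    define L where "L = qmap_deriv a b x2"
    have "N L = 1"
      using assms(1,2,4) \<open>N a > 0\<close> by (simp add: L_def x2_def qmap_deriv_fixed_point N_divide)
    have "N (q - L) = N a * N (z - x2) / \<kappa> ^ 3"
      using N_qmap_quotient_minus_deriv[OF \<open>b * x2 + 1 \<noteq> 0\<close> False near] den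
      by (simp add: q_def L_def)
    also have "\<dots> < 1"
      using \<open>N a * N (z - x2) < \<kappa>\<close> \<open>1 \<le> \<kappa>\<close> power_increasing[of 1 3 \<kappa>]
      by (simp add: divide_less_eq)
    finally have "N q = 1"
      using N_add_eq_left[of "q - L" L] \<open>N L = 1\<close> by simp
    then show ?thesis
      using False N_mult[of q "z - x2"] qmap_fixed_point[OF assms(1,2)]
      by (simp add: q_def x2_def)
  qed (simp add: x2_def qmap_fixed_point[OF assms(1,2)])
qed

lemma max_siegel_qmap_fixed_point:
  assumes "a \<noteq> 0" and "b \<noteq> 0" and "a \<noteq> b" and "N b = N a" and "N (2 * a - b) = N a"
  shows "max_siegel N (UNIV - {- 1 / b}) (qmap a b) (1 / (a - b)) = nball N (1 / (a - b)) (1 / N (a - b))"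
proof (rule max_siegel_eq_ball)
  show "0 < 1 / N (a - b)"
    using assms(3) by (simp add: N_pos)
  have "- 1 / b - 1 / (a - b) = - (a / (b * (a - b)))"
    using assms(2,3) by (simp add: field_simps)
  then show "N (- 1 / b - 1 / (a - b)) = 1 / N (a - b)"
    using N_pos[OF assms(1)] by (simp add: N_minus N_divide N_mult assms(4))
  show "z \<in> UNIV - {- 1 / b} \<and> N (qmap a b z - 1 / (a - b)) = N (z - 1 / (a - b))"
    if "N (z - 1 / (a - b)) < 1 / N (a - b)" for z
    using qmap_isometric_near_fixed_point[OF assms(1,3,4,5) that] mem_qmap_domain_iff[OF assms(2)]
    by blast
qed simp

end

theorem theorem3p7:
  fixes N :: "'a::field \<Rightarrow> real" and p :: nat and a b :: 'a
  assumes "prime p" and "p > 2" and "Cp_like p N"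
    and "a \<noteq> 0" and "b \<noteq> 0" and "a \<noteq> b"
    and "N (2 * a) = N b" and "N (2 * a - b) = N a"
  defines "D \<equiv> UNIV - {- 1 / b}"
    and "f \<equiv> (\<lambda>x. a * x\<^sup>2 / (b * x + 1))"
    and "x1 \<equiv> 0"
    and "x2 \<equiv> 1 / (a - b)"
  shows "attracting_fp N D f x1 \<and> indifferent_fp N D f x2 \<and>
         basin N D f x1 = nball N x1 (1 / N a) \<and>
         max_siegel N D f x2 = nball N x2 (1 / N (a - b))"
proof -
  interpret nonarch_absval N
    using Cp_like_nonarch_absval[OF assms(3)] .
  have "N (of_nat p) < 1" and "odd p"
    using assms(1-3) prime_odd_nat[OF assms(1)] by (simp_all add: Cp_like_def)
  then have "N b = N a"
    using assms(7) N_two by (simp add: N_mult)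
  have "f = qmap a b"
    by (simp add: f_def qmap_def fun_eq_iff)
  then show ?thesis
    unfolding D_def x1_def x2_def
    using attracting_fp_qmap_zero[OF assms(5)] indifferent_fp_qmap_fixed_point[OF assms(4-6,8)]
      basin_qmap_zero[OF assms(4,5) \<open>N b = N a\<close>]
      max_siegel_qmap_fixed_point[OF assms(4-6) \<open>N b = N a\<close> assms(8)]
    by simp
qed

end
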